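(* Let $(q_0,q_1,\eta_0,\eta_1,U)$ be a restricted attack with respect to the computational basis ($\ket{v_i}=\ket{i}$), with forward isometry $\mathcal{F}$ and vectors $\ket{e},\ket{f}\in\mathcal{H}_E$ as in the context. Let $\mathcal{H}_{A_1}=\mathcal{H}_{A_2}=\mathcal{H}_B=\mathbb{C}^2$. Define the linear map $\mathbf{Rw}:\mathrm{span}\{\ket{00},\ket{11}\}\subseteq\mathcal{H}_{A_1A_2}\to\mathcal{H}_{A_1A_2E}$ by \[ \mathbf{Rw}\ket{00}=\frac{q_0\ket{0}\ket{0}\ket{0}_E+\sqrt{1-q_1^2}\ket{1}\ket{0}\ket{f}}{\sqrt{1-q_1^2+q_0^2}},\qquad \mathbf{Rw}\ket{11}=\frac{\sqrt{1-q_0^2}\ket{0}\ket{1}\ket{e}+q_1\ket{1}\ket{1}\ket{0}_E}{\sqrt{1-q_0^2+q_1^2}} \] (factors ordered $A_1A_2E$; if a denominator vanishes, the corresponding image is an arbitrary unit vector). Set $p_0=\tfrac12(1-q_1^2+q_0^2)$ and $p_1=1-p_0=\tfrac12(1-q_0^2+q_1^2)$. Consider: (SQKD, entanglement version) the state $(I_{A_1}\otimes\mathcal{F})\ket{\Phi^+}_{A_1A_2}$ with $\ket{\Phi^+}=\tfrac{1}{\sqrt2}(\ket{00}+\ket{11})$ and $\mathcal{F}$ acting $A_2\to A_2E$, tensored with $\ket{0}_B$, followed by Bob's operation $O$ on $A_2B$ ($O=I$ for Reflect, $O=\mathrm{CNOT}_{A_2\to B}$ for Measure and Resend), followed by $U$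 on $A_2E$; ($\Pi^*$) Bob prepares $\sqrt{p_0}\ket{000}_{A_1A_2B}+\sqrt{p_1}\ket{110}_{A_1A_2B}$ (Reflect) or $\sqrt{p_0}\ket{000}_{A_1A_2B}+\sqrt{p_1}\ket{111}_{A_1A_2B}$ (Measure and Resend), then $\mathbf{Rw}$ is applied to $A_1A_2$ (producing $A_1A_2E$), then $U$ is applied to $A_2E$. Then $\mathbf{Rw}$ is an isometry, and in each of the two modes (Reflect, Measure and Resend) the final pure state on $A_1A_2BE$ produced by the SQKD version equals that produced by $\Pi^*$. Consequently, if Bob chooses Measure and Resend with the same probability in both protocols, the single-round density operators $\rho_{ABE}$ (SQKD version) and $\sigma_{ABE}$ ($\Pi^*$ under the attack $(p_0,(I_{A_1}\otimes U)\mathbf{Rw})$) coincide.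
   Context: $\mathcal{H}_E$ is a finite-dimensional Hilbert space with fixed orthonormal vectors $\ket 0_E,\ket 1_E$; $\mathbb{D}=\{z\in\mathbb{C}:|z|\le1\}$. A restricted attack with respect to the computational basis is a tuple $(q_0,q_1,\eta_0,\eta_1,U)$ with $q_0,q_1\in[0,1]$, $\eta_0,\eta_1\in\mathbb{D}$ satisfying $q_0\eta_1\sqrt{1-q_1^2}+q_1\overline{\eta_0}\sqrt{1-q_0^2}=0$, and $U$ a unitary on $\mathbb{C}^2\otimes\mathcal{H}_E$. Its forward isometry is $\mathcal{F}:\mathbb{C}^2\to\mathbb{C}^2\otimes\mathcal{H}_E$, $\mathcal{F}\ket{0}=q_0\ket{0}\ket{0}_E+\sqrt{1-q_0^2}\ket{1}\ket{e}$, $\mathcal{F}\ket{1}=\sqrt{1-q_1^2}\ket{0}\ket{f}+q_1\ket{1}\ket{0}_E$, where $\ket{e}=\eta_0\ket{0}_E+\sqrt{1-|\eta_0|^2}\ket{1}_E$ and $\ket{f}=\eta_1\ket{0}_E+\sqrt{1-|\eta_1|^2}\ket{1}_E$. $\mathrm{CNOT}_{A_2\to B}\ket{t}_{A_2}\ket{b}_B=\ket{t}_{A_2}\ket{b\oplus t}_B$. *)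

theory Defs
  imports Complex_Main
begin

text \<open>Finite-dimensional Hilbert spaces are modelled as coordinate spaces
  over a finite index type: \<open>\<H>\<^sub>E\<close> is \<open>'e \<Rightarrow> complex\<close> with \<open>'e::finite\<close>;
  \<open>\<complex>\<^sup>2\<close> is indexed by \<open>bool\<close> (False = |0>, True = |1>); tensor products are
  indexed by products of index types.  Factor order A1 A2 B E.\<close>

definition cinner :: "('i::finite \<Rightarrow> complex) \<Rightarrow> ('i \<Rightarrow> complex) \<Rightarrow> complex" where
  "cinner x y = (\<Sum>i\<in>UNIV. cnj (x i) * y i)"

definition unitary_op :: "('i::finite \<Rightarrow> 'i \<Rightarrow> complex) \<Rightarrow> bool" where
  "unitary_op M \<longleftrightarrow>
     (\<forall>i j. (\<Sum>k\<in>UNIV. cnj (M k i) * M k j) = (if i = j then 1 else 0)) \<and>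
     (\<forall>i j. (\<Sum>k\<in>UNIV. M i k * cnj (M j k)) = (if i = j then 1 else 0))"

definition restricted_attack ::
  "real \<Rightarrow> real \<Rightarrow> complex \<Rightarrow> complex \<Rightarrow> (bool \<times> 'e::finite \<Rightarrow> bool \<times> 'e \<Rightarrow> complex) \<Rightarrow> bool" where
  "restricted_attack q0 q1 \<eta>0 \<eta>1 U \<longleftrightarrow>
     0 \<le> q0 \<and> q0 \<le> 1 \<and> 0 \<le> q1 \<and> q1 \<le> 1 \<and> cmod \<eta>0 \<le> 1 \<and> cmod \<eta>1 \<le> 1 \<and>
     complex_of_real q0 * \<eta>1 * complex_of_real (sqrt (1 - q1\<^sup>2))
       + complex_of_real q1 * cnj \<eta>0 * complex_of_real (sqrt (1 - q0\<^sup>2)) = 0 \<and>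
     unitary_op U"

definition ket_ef :: "complex \<Rightarrow> ('e \<Rightarrow> complex) \<Rightarrow> ('e \<Rightarrow> complex) \<Rightarrow> 'e \<Rightarrow> complex" where
  "ket_ef \<eta> e0 e1 = (\<lambda>x. \<eta> * e0 x + complex_of_real (sqrt (1 - (cmod \<eta>)\<^sup>2)) * e1 x)"

text \<open>Forward isometry \<open>\<F> : \<complex>\<^sup>2 \<rightarrow> \<complex>\<^sup>2 \<otimes> \<H>\<^sub>E\<close>, given by the images of |0>, |1>.\<close>
definition fwd :: "real \<Rightarrow> real \<Rightarrow> complex \<Rightarrow> complex \<Rightarrow> ('e \<Rightarrow> complex) \<Rightarrow> ('e \<Rightarrow> complex)
    \<Rightarrow> bool \<Rightarrow> bool \<times> 'e \<Rightarrow> complex" where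
  "fwd q0 q1 \<eta>0 \<eta>1 e0 e1 t = (\<lambda>(a, x).
     if \<not> t then (if \<not> a then complex_of_real q0 * e0 x
                  else complex_of_real (sqrt (1 - q0\<^sup>2)) * ket_ef \<eta>0 e0 e1 x)
     else (if \<not> a then complex_of_real (sqrt (1 - q1\<^sup>2)) * ket_ef \<eta>1 e0 e1 x
           else complex_of_real q1 * e0 x))"

definition phi_plus :: "bool \<times> bool \<Rightarrow> complex" where
  "phi_plus = (\<lambda>(a1, a2). if a1 = a2 then complex_of_real (1 / sqrt 2) else 0)"

definition apply_IF :: "(bool \<Rightarrow> bool \<times> 'e::finite \<Rightarrow> complex) \<Rightarrow> (bool \<times> bool \<Rightarrow> complex)
    \<Rightarrow> bool \<times> bool \<times> 'e \<Rightarrow> complex" where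
  "apply_IF F \<phi> = (\<lambda>(a1, a2, x). \<Sum>t\<in>UNIV. \<phi> (a1, t) * F t (a2, x))"

definition tensor_B0 :: "(bool \<times> bool \<times> 'e \<Rightarrow> complex) \<Rightarrow> bool \<times> bool \<times> bool \<times> 'e \<Rightarrow> complex" where
  "tensor_B0 \<psi> = (\<lambda>(a1, a2, b, x). if b then 0 else \<psi> (a1, a2, x))"

definition cnot_A2B :: "(bool \<times> bool \<times> bool \<times> 'e \<Rightarrow> complex) \<Rightarrow> bool \<times> bool \<times> bool \<times> 'e \<Rightarrow> complex" where
  "cnot_A2B \<psi> = (\<lambda>(a1, a2, b, x). \<psi> (a1, a2, b \<noteq> a2, x))"

definition apply_U_A2E :: "(bool \<times> 'e::finite \<Rightarrow> bool \<times> 'e \<Rightarrow> complex)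
    \<Rightarrow> (bool \<times> bool \<times> bool \<times> 'e \<Rightarrow> complex) \<Rightarrow> bool \<times> bool \<times> bool \<times> 'e \<Rightarrow> complex" where
  "apply_U_A2E U \<psi> = (\<lambda>(a1, a2, b, x). \<Sum>(a2', x')\<in>UNIV. U (a2, x) (a2', x') * \<psi> (a1, a2', b, x'))"

datatype mode = Reflect | MeasureResend

definition bob_op :: "mode \<Rightarrow> (bool \<times> bool \<times> bool \<times> 'e \<Rightarrow> complex) \<Rightarrow> bool \<times> bool \<times> bool \<times> 'e \<Rightarrow> complex" where
  "bob_op m = (case m of Reflect \<Rightarrow> id | MeasureResend \<Rightarrow> cnot_A2B)"

definition sqkd_final ::
  "real \<Rightarrow> real \<Rightarrow> complex \<Rightarrow> complex \<Rightarrow> (bool \<times> 'e::finite \<Rightarrow> bool \<times> 'e \<Rightarrow> complex)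
    \<Rightarrow> ('e \<Rightarrow> complex) \<Rightarrow> ('e \<Rightarrow> complex) \<Rightarrow> mode \<Rightarrow> bool \<times> bool \<times> bool \<times> 'e \<Rightarrow> complex" where
  "sqkd_final q0 q1 \<eta>0 \<eta>1 U e0 e1 m =
     apply_U_A2E U (bob_op m (tensor_B0 (apply_IF (fwd q0 q1 \<eta>0 \<eta>1 e0 e1) phi_plus)))"

text \<open>Images of |00> and |11> under \<open>Rw\<close> (states on A1 A2 E).  When a denominator
  vanishes the image is the given vector \<open>w0\<close> resp. \<open>w1\<close>.\<close>
definition Rw00 :: "real \<Rightarrow> real \<Rightarrow> complex \<Rightarrow> ('e \<Rightarrow> complex) \<Rightarrow> ('e \<Rightarrow> complex)
    \<Rightarrow> (bool \<times> bool \<times> 'e \<Rightarrow> complex) \<Rightarrow> bool \<times> bool \<times> 'e \<Rightarrow> complex" where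
  "Rw00 q0 q1 \<eta>1 e0 e1 w0 =
     (if sqrt (1 - q1\<^sup>2 + q0\<^sup>2) = 0 then w0 else
      (\<lambda>(a1, a2, x). (if a2 then 0
          else if \<not> a1 then complex_of_real q0 * e0 x
          else complex_of_real (sqrt (1 - q1\<^sup>2)) * ket_ef \<eta>1 e0 e1 x)
        / complex_of_real (sqrt (1 - q1\<^sup>2 + q0\<^sup>2))))"

definition Rw11 :: "real \<Rightarrow> real \<Rightarrow> complex \<Rightarrow> ('e \<Rightarrow> complex) \<Rightarrow> ('e \<Rightarrow> complex)
    \<Rightarrow> (bool \<times> bool \<times> 'e \<Rightarrow> complex) \<Rightarrow> bool \<times> bool \<times> 'e \<Rightarrow> complex" where
  "Rw11 q0 q1 \<eta>0 e0 e1 w1 =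
     (if sqrt (1 - q0\<^sup>2 + q1\<^sup>2) = 0 then w1 else
      (\<lambda>(a1, a2, x). (if \<not> a2 then 0
          else if \<not> a1 then complex_of_real (sqrt (1 - q0\<^sup>2)) * ket_ef \<eta>0 e0 e1 x
          else complex_of_real q1 * e0 x)
        / complex_of_real (sqrt (1 - q0\<^sup>2 + q1\<^sup>2))))"

definition rw_map :: "(bool \<times> bool \<times> 'e \<Rightarrow> complex) \<Rightarrow> (bool \<times> bool \<times> 'e \<Rightarrow> complex)
    \<Rightarrow> complex \<Rightarrow> complex \<Rightarrow> bool \<times> bool \<times> 'e \<Rightarrow> complex" where
  "rw_map R00 R11 \<alpha> \<beta> = (\<lambda>v. \<alpha> * R00 v + \<beta> * R11 v)"

definition isometry_on_span :: "(bool \<times> bool \<times> 'e::finite \<Rightarrow> complex) \<Rightarrow> (bool \<times> bool \<times> 'e \<Rightarrow> complex) \<Rightarrow> bool" where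
  "isometry_on_span R00 R11 \<longleftrightarrow>
     (\<forall>\<alpha> \<beta>. cinner (rw_map R00 R11 \<alpha> \<beta>) (rw_map R00 R11 \<alpha> \<beta>)
               = complex_of_real ((cmod \<alpha>)\<^sup>2 + (cmod \<beta>)\<^sup>2))"

text \<open>\<open>Rw\<close> applied to A1 A2 of a state on A1 A2 B whose A1 A2 part lies in
  span{|00>,|11>}, giving a state on A1 A2 B E.\<close>
definition apply_Rw :: "(bool \<times> bool \<times> 'e \<Rightarrow> complex) \<Rightarrow> (bool \<times> bool \<times> 'e \<Rightarrow> complex)
    \<Rightarrow> (bool \<times> bool \<times> bool \<Rightarrow> complex) \<Rightarrow> bool \<times> bool \<times> bool \<times> 'e \<Rightarrow> complex" where
  "apply_Rw R00 R11 \<phi> = (\<lambda>(a1, a2, b, x).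
     \<phi> (False, False, b) * R00 (a1, a2, x) + \<phi> (True, True, b) * R11 (a1, a2, x))"

definition bob_prep :: "real \<Rightarrow> real \<Rightarrow> mode \<Rightarrow> bool \<times> bool \<times> bool \<Rightarrow> complex" where
  "bob_prep p0 p1 m = (\<lambda>v.
     if v = (False, False, False) then complex_of_real (sqrt p0)
     else if v = (True, True, m = MeasureResend) then complex_of_real (sqrt p1)
     else 0)"

definition pistar_final ::
  "real \<Rightarrow> real \<Rightarrow> (bool \<times> 'e::finite \<Rightarrow> bool \<times> 'e \<Rightarrow> complex)
    \<Rightarrow> (bool \<times> bool \<times> 'e \<Rightarrow> complex) \<Rightarrow> (bool \<times> bool \<times> 'e \<Rightarrow> complex)
    \<Rightarrow> mode \<Rightarrow> bool \<times> bool \<times> bool \<times> 'e \<Rightarrow> complex" where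
  "pistar_final q0 q1 U R00 R11 m =
     apply_U_A2E U (apply_Rw R00 R11
       (bob_prep ((1 - q1\<^sup>2 + q0\<^sup>2) / 2) ((1 - q0\<^sup>2 + q1\<^sup>2) / 2) m))"

definition outer :: "('i \<Rightarrow> complex) \<Rightarrow> 'i \<Rightarrow> 'i \<Rightarrow> complex" where
  "outer \<psi> = (\<lambda>i j. \<psi> i * cnj (\<psi> j))"

definition round_density :: "real \<Rightarrow> (mode \<Rightarrow> 'i \<Rightarrow> complex) \<Rightarrow> 'i \<Rightarrow> 'i \<Rightarrow> complex" where
  "round_density r \<Psi> = (\<lambda>i j. complex_of_real r * outer (\<Psi> MeasureResend) i j
                             + complex_of_real (1 - r) * outer (\<Psi> Reflect) i j)"

end

theory Submission
  imports Defs
begin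

text \<open>Since \<open>|\<Phi>\<^sup>+\<rangle>\<close> correlates \<open>A\<^sub>1\<close> with the input of \<open>\<F>\<close>, the amplitude of
  \<open>(I \<otimes> \<F>)|\<Phi>\<^sup>+\<rangle>\<close> at \<open>|a\<^sub>1 a\<^sub>2\<rangle>\<close> is \<open>\<F>|a\<^sub>1\<rangle>\<close> at \<open>|a\<^sub>2\<rangle>\<close>, divided by \<open>\<surd>2\<close>.
  Splitting by the value of \<open>a\<^sub>2\<close>, the two pieces have disjoint \<open>A\<^sub>2\<close>-support and squared
  norms \<open>p\<^sub>0, p\<^sub>1\<close>, and \<open>Rw|00\<rangle>, Rw|11\<rangle>\<close> are precisely these pieces normalised; so they
  are orthonormal and \<open>(I \<otimes> \<F>)|\<Phi>\<^sup>+\<rangle> = \<surd>p\<^sub>0 Rw|00\<rangle> + \<surd>p\<^sub>1 Rw|11\<rangle>\<close> (a vanishing denominator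
  means a vanishing piece, so the arbitrary image is multiplied by \<open>0\<close>).  Bob's CNOT copies
  \<open>a\<^sub>2\<close> into \<open>B\<close>, which is exactly his preparation in \<open>\<Pi>\<^sup>*\<close>, and the common final \<open>U\<close>
  preserves the equality.  Exchanging \<open>|0\<rangle>\<close> and \<open>|1\<rangle>\<close> on \<open>A\<^sub>1\<close> and \<open>A\<^sub>2\<close> together with
  \<open>(q\<^sub>0, \<eta>\<^sub>0) \<leftrightarrow> (q\<^sub>1, \<eta>\<^sub>1)\<close> swaps the two pieces, so the facts about \<open>Rw|11\<rangle>\<close> follow from
  those about \<open>Rw|00\<rangle>\<close>.\<close>

lemma cinner_commute: "cinner v u = cnj (cinner u v)"
  unfolding cinner_def by (simp add: mult.commute)

lemma cinner_scale: "cinner (\<lambda>x. c * u x) (\<lambda>x. d * v x) = cnj c * d * cinner u v"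
  unfolding cinner_def by (simp add: sum_distrib_left mult_ac)

lemma cinner_add_left: "cinner (\<lambda>x. u x + w x) v = cinner u v + cinner w v"
  and cinner_add_right: "cinner v (\<lambda>x. u x + w x) = cinner v u + cinner v w"
  unfolding cinner_def by (simp_all add: sum.distrib algebra_simps)

lemma cinner_zero_left: "cinner (\<lambda>x. 0) v = 0"
  unfolding cinner_def by simp

lemma cinner_bool_prod:
  "cinner (u :: bool \<times> 'b::finite \<Rightarrow> complex) v
     = cinner (\<lambda>x. u (False, x)) (\<lambda>x. v (False, x)) + cinner (\<lambda>x. u (True, x)) (\<lambda>x. v (True, x))"
  unfolding cinner_def UNIV_Times_UNIV [symmetric] sum.cartesian_product'
  by (simp add: UNIV_bool)

lemma cinner_self_eq_norm_sum:
  assumes "cinner a a = 1" "cinner b b = 1" "cinner a b = 0"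
  shows "cinner (\<lambda>x. \<alpha> * a x + \<beta> * b x) (\<lambda>x. \<alpha> * a x + \<beta> * b x)
           = complex_of_real ((cmod \<alpha>)\<^sup>2 + (cmod \<beta>)\<^sup>2)"
proof -
  have "cinner b a = 0" using assms(3) cinner_commute [of b a] by simp
  then have "cinner (\<lambda>x. \<alpha> * a x + \<beta> * b x) (\<lambda>x. \<alpha> * a x + \<beta> * b x) = cnj \<alpha> * \<alpha> + cnj \<beta> * \<beta>"
    using assms by (simp add: cinner_add_left cinner_add_right cinner_scale)
  then show ?thesis by (simp only: of_real_add complex_norm_square mult.commute)
qed

lemma isometry_on_span_if_orthonormal:
  assumes "cinner R00 R00 = 1" "cinner R11 R11 = 1" "cinner R00 R11 = 0"
  shows "isometry_on_span R00 R11"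
  unfolding isometry_on_span_def rw_map_def using cinner_self_eq_norm_sum [OF assms] by blast

lemma cinner_ket_ef_self:
  assumes "cinner e0 e0 = 1" "cinner e1 e1 = 1" "cinner e0 e1 = 0" "cmod \<eta> \<le> 1"
  shows "cinner (ket_ef \<eta> e0 e1) (ket_ef \<eta> e0 e1) = 1"
proof -
  have "(cmod \<eta>)\<^sup>2 \<le> 1" using assms(4) by (simp add: power_le_one)
  moreover have "cinner (ket_ef \<eta> e0 e1) (ket_ef \<eta> e0 e1)
      = complex_of_real ((cmod \<eta>)\<^sup>2 + (cmod (complex_of_real (sqrt (1 - (cmod \<eta>)\<^sup>2))))\<^sup>2)"
    unfolding ket_ef_def by (rule cinner_self_eq_norm_sum [OF assms(1-3)])
  ultimately show ?thesis by simp
qed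

definition flip_A1A2 :: "bool \<times> bool \<times> 'e \<Rightarrow> bool \<times> bool \<times> 'e" where
  "flip_A1A2 = (\<lambda>(a1, a2, x). (\<not> a1, \<not> a2, x))"

lemma flip_A1A2_flip_A1A2 [simp]: "flip_A1A2 (flip_A1A2 v) = v"
  by (auto simp: flip_A1A2_def split: prod.splits)

lemma cinner_comp_flip_A1A2:
  "cinner (u \<circ> flip_A1A2) (v \<circ> flip_A1A2) = cinner (u :: bool \<times> bool \<times> 'e::finite \<Rightarrow> complex) v"
  unfolding cinner_def
  by (rule sum.reindex_bij_witness [of _ flip_A1A2 flip_A1A2]) auto

lemma Rw11_eq_Rw00_flip:
  "Rw11 q0 q1 \<eta>0 e0 e1 w1 = Rw00 q1 q0 \<eta>0 e0 e1 (w1 \<circ> flip_A1A2) \<circ> flip_A1A2"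
  by (auto simp: Rw11_def Rw00_def flip_A1A2_def fun_eq_iff add.commute)

lemma fwd_flip:
  "fwd q0 q1 \<eta>0 \<eta>1 e0 e1 t (a, x) = fwd q1 q0 \<eta>1 \<eta>0 e0 e1 (\<not> t) (\<not> a, x)"
  by (simp add: fwd_def)

lemma Rw_denominator_eq_0D:
  assumes "q1\<^sup>2 \<le> 1" "sqrt (1 - q1\<^sup>2 + q0\<^sup>2) = 0"
  shows "q0 = 0" "q1\<^sup>2 = 1"
  using assms by (auto simp: add_nonneg_eq_0_iff)

lemma cinner_Rw00_self:
  assumes "cinner e0 e0 = 1" "cinner e1 e1 = 1" "cinner e0 e1 = 0"
    and "q1\<^sup>2 \<le> 1" "cmod \<eta>1 \<le> 1"
    and "sqrt (1 - q1\<^sup>2 + q0\<^sup>2) = 0 \<Longrightarrow> cinner w0 w0 = 1"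
  shows "cinner (Rw00 q0 q1 \<eta>1 e0 e1 w0) (Rw00 q0 q1 \<eta>1 e0 e1 w0) = 1"
proof (cases "sqrt (1 - q1\<^sup>2 + q0\<^sup>2) = 0")
  case True
  then show ?thesis using assms(6) by (simp add: Rw00_def)
next
  case False
  define d where "d = sqrt (1 - q1\<^sup>2 + q0\<^sup>2)"
  define R where "R = Rw00 q0 q1 \<eta>1 e0 e1 w0"
  have d: "q0\<^sup>2 + (1 - q1\<^sup>2) = d\<^sup>2" "d \<noteq> 0"
    using False assms(4) by (simp_all add: d_def)
  have slices:
    "(\<lambda>x. R (False, False, x)) = (\<lambda>x. complex_of_real (q0 / d) * e0 x)"
    "(\<lambda>x. R (False, True, x)) = (\<lambda>x. 0)"
    "(\<lambda>x. R (True, False, x)) = (\<lambda>x. complex_of_real (sqrt (1 - q1\<^sup>2) / d) * ket_ef \<eta>1 e0 e1 x)"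
    "(\<lambda>x. R (True, True, x)) = (\<lambda>x. 0)"
    using False by (simp_all add: R_def Rw00_def d_def fun_eq_iff)
  have "cinner R R = cnj (complex_of_real (q0 / d)) * complex_of_real (q0 / d) * cinner e0 e0
      + cnj (complex_of_real (sqrt (1 - q1\<^sup>2) / d)) * complex_of_real (sqrt (1 - q1\<^sup>2) / d)
        * cinner (ket_ef \<eta>1 e0 e1) (ket_ef \<eta>1 e0 e1)"
    unfolding cinner_bool_prod [of R] cinner_bool_prod [of "\<lambda>x. R (False, x)"]
      cinner_bool_prod [of "\<lambda>x. R (True, x)"] slices cinner_scale cinner_zero_left
    by simp
  also have "\<dots> = complex_of_real ((q0\<^sup>2 + (1 - q1\<^sup>2)) / d\<^sup>2)"
    using assms(4) by (simp add: assms(1) cinner_ket_ef_self [OF assms(1-3,5)] power_divide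
        power2_eq_square add_divide_distrib flip: of_real_mult of_real_add of_real_divide of_real_diff)
  finally have "cinner R R = complex_of_real ((q0\<^sup>2 + (1 - q1\<^sup>2)) / d\<^sup>2)" .
  then show ?thesis using d by (simp add: R_def)
qed

lemma cinner_Rw11_self:
  assumes "cinner e0 e0 = 1" "cinner e1 e1 = 1" "cinner e0 e1 = 0"
    and "q0\<^sup>2 \<le> 1" "cmod \<eta>0 \<le> 1"
    and "sqrt (1 - q0\<^sup>2 + q1\<^sup>2) = 0 \<Longrightarrow> cinner w1 w1 = 1"
  shows "cinner (Rw11 q0 q1 \<eta>0 e0 e1 w1) (Rw11 q0 q1 \<eta>0 e0 e1 w1) = 1"
  unfolding Rw11_eq_Rw00_flip cinner_comp_flip_A1A2
  using assms by (intro cinner_Rw00_self) (simp_all add: cinner_comp_flip_A1A2)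

lemma cinner_Rw00_Rw11:
  assumes "sqrt (1 - q1\<^sup>2 + q0\<^sup>2) = 0 \<Longrightarrow> cinner w0 (Rw11 q0 q1 \<eta>0 e0 e1 w1) = 0"
    and "sqrt (1 - q0\<^sup>2 + q1\<^sup>2) = 0 \<Longrightarrow> cinner (Rw00 q0 q1 \<eta>1 e0 e1 w0) w1 = 0"
  shows "cinner (Rw00 q0 q1 \<eta>1 e0 e1 w0) (Rw11 q0 q1 \<eta>0 e0 e1 w1) = 0"
proof (cases "sqrt (1 - q1\<^sup>2 + q0\<^sup>2) = 0 \<or> sqrt (1 - q0\<^sup>2 + q1\<^sup>2) = 0")
  case True
  then show ?thesis using assms by (auto simp: Rw00_def Rw11_def)
next
  case False
  then show ?thesis
    unfolding cinner_def by (intro sum.neutral) (auto simp: Rw00_def Rw11_def)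
qed

lemma Rw00_scaled_eq_fwd:
  assumes "q1\<^sup>2 \<le> 1"
  shows "complex_of_real (sqrt ((1 - q1\<^sup>2 + q0\<^sup>2) / 2)) * Rw00 q0 q1 \<eta>1 e0 e1 w0 (a1, a2, x)
    = (if a2 then 0 else fwd q0 q1 \<eta>0 \<eta>1 e0 e1 a1 (False, x) / complex_of_real (sqrt 2))"
proof (cases "sqrt (1 - q1\<^sup>2 + q0\<^sup>2) = 0")
  case True
  then show ?thesis using Rw_denominator_eq_0D [OF assms True] by (simp add: fwd_def)
next
  case False
  then show ?thesis by (simp add: Rw00_def fwd_def real_sqrt_divide)
qed

lemma Rw11_scaled_eq_fwd:
  assumes "q0\<^sup>2 \<le> 1"
  shows "complex_of_real (sqrt ((1 - q0\<^sup>2 + q1\<^sup>2) / 2)) * Rw11 q0 q1 \<eta>0 e0 e1 w1 (a1, a2, x)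
    = (if a2 then fwd q0 q1 \<eta>0 \<eta>1 e0 e1 a1 (True, x) / complex_of_real (sqrt 2) else 0)"
  using Rw00_scaled_eq_fwd [OF assms, of q1 \<eta>0 e0 e1 "w1 \<circ> flip_A1A2" "\<not> a1" "\<not> a2" x \<eta>1]
  by (simp add: Rw11_eq_Rw00_flip flip_A1A2_def fwd_flip [of q0 q1 \<eta>0 \<eta>1 e0 e1 a1 True])

lemma apply_IF_phi_plus:
  "apply_IF F phi_plus (a1, a2, x) = F a1 (a2, x) / complex_of_real (sqrt 2)"
  by (cases a1) (simp_all add: apply_IF_def phi_plus_def UNIV_bool)

lemma bob_op_entangled_state_eq_apply_Rw:
  assumes "q0\<^sup>2 \<le> 1" "q1\<^sup>2 \<le> 1"
  shows "bob_op m (tensor_B0 (apply_IF (fwd q0 q1 \<eta>0 \<eta>1 e0 e1) phi_plus))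
    = apply_Rw (Rw00 q0 q1 \<eta>1 e0 e1 w0) (Rw11 q0 q1 \<eta>0 e0 e1 w1)
        (bob_prep ((1 - q1\<^sup>2 + q0\<^sup>2) / 2) ((1 - q0\<^sup>2 + q1\<^sup>2) / 2) m)"
proof (rule ext, clarify)
  fix a1 a2 b x
  show "bob_op m (tensor_B0 (apply_IF (fwd q0 q1 \<eta>0 \<eta>1 e0 e1) phi_plus)) (a1, a2, b, x)
    = apply_Rw (Rw00 q0 q1 \<eta>1 e0 e1 w0) (Rw11 q0 q1 \<eta>0 e0 e1 w1)
        (bob_prep ((1 - q1\<^sup>2 + q0\<^sup>2) / 2) ((1 - q0\<^sup>2 + q1\<^sup>2) / 2) m) (a1, a2, b, x)"
    by (cases m; cases a2; cases b)
      (simp_all add: bob_op_def cnot_A2B_def tensor_B0_def apply_IF_phi_plus apply_Rw_def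
        bob_prep_def Rw00_scaled_eq_fwd [OF assms(2), where ?\<eta>0.0 = \<eta>0]
        Rw11_scaled_eq_fwd [OF assms(1), where ?\<eta>1.0 = \<eta>1])
qed

lemma sqkd_final_eq_pistar_final:
  assumes "q0\<^sup>2 \<le> 1" "q1\<^sup>2 \<le> 1"
  shows "sqkd_final q0 q1 \<eta>0 \<eta>1 U e0 e1 m
    = pistar_final q0 q1 U (Rw00 q0 q1 \<eta>1 e0 e1 w0) (Rw11 q0 q1 \<eta>0 e0 e1 w1) m"
  unfolding sqkd_final_def pistar_final_def
  by (metis bob_op_entangled_state_eq_apply_Rw [OF assms])

theorem theorem2:
  fixes q0 q1 :: real and \<eta>0 \<eta>1 :: complex
    and U :: "bool \<times> 'e::finite \<Rightarrow> bool \<times> 'e \<Rightarrow> complex"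
    and e0 e1 :: "'e \<Rightarrow> complex"
    and w0 w1 :: "bool \<times> bool \<times> 'e \<Rightarrow> complex"
  assumes orth: "cinner e0 e0 = 1" "cinner e1 e1 = 1" "cinner e0 e1 = 0"
    and att: "restricted_attack q0 q1 \<eta>0 \<eta>1 U"
    and arb0: "sqrt (1 - q1\<^sup>2 + q0\<^sup>2) = 0 \<Longrightarrow>
                 cinner w0 w0 = 1 \<and> cinner w0 (Rw11 q0 q1 \<eta>0 e0 e1 w1) = 0"
    and arb1: "sqrt (1 - q0\<^sup>2 + q1\<^sup>2) = 0 \<Longrightarrow>
                 cinner w1 w1 = 1 \<and> cinner (Rw00 q0 q1 \<eta>1 e0 e1 w0) w1 = 0"
  shows "isometry_on_span (Rw00 q0 q1 \<eta>1 e0 e1 w0) (Rw11 q0 q1 \<eta>0 e0 e1 w1)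
    \<and> (\<forall>m. sqkd_final q0 q1 \<eta>0 \<eta>1 U e0 e1 m
            = pistar_final q0 q1 U (Rw00 q0 q1 \<eta>1 e0 e1 w0) (Rw11 q0 q1 \<eta>0 e0 e1 w1) m)
    \<and> (\<forall>r. 0 \<le> r \<and> r \<le> 1 \<longrightarrow>
         round_density r (sqkd_final q0 q1 \<eta>0 \<eta>1 U e0 e1)
         = round_density r (pistar_final q0 q1 U (Rw00 q0 q1 \<eta>1 e0 e1 w0) (Rw11 q0 q1 \<eta>0 e0 e1 w1)))"
proof -
  from att have "\<bar>q0\<bar> \<le> 1" "\<bar>q1\<bar> \<le> 1" "cmod \<eta>0 \<le> 1" "cmod \<eta>1 \<le> 1"
    by (auto simp: restricted_attack_def)
  then have q: "q0\<^sup>2 \<le> 1" "q1\<^sup>2 \<le> 1" "cmod \<eta>0 \<le> 1" "cmod \<eta>1 \<le> 1"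
    by (simp_all add: abs_square_le_1)
  have "isometry_on_span (Rw00 q0 q1 \<eta>1 e0 e1 w0) (Rw11 q0 q1 \<eta>0 e0 e1 w1)"
    using arb0 arb1
    by (intro isometry_on_span_if_orthonormal cinner_Rw00_self cinner_Rw11_self cinner_Rw00_Rw11
        orth q) auto
  moreover have "sqkd_final q0 q1 \<eta>0 \<eta>1 U e0 e1
      = pistar_final q0 q1 U (Rw00 q0 q1 \<eta>1 e0 e1 w0) (Rw11 q0 q1 \<eta>0 e0 e1 w1)"
    using sqkd_final_eq_pistar_final [OF q(1,2)] by (rule ext)
  ultimately show ?thesis by simp
qed

end
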